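(* Let $H$ be a finite-dimensional real or complex Hilbert space with inner product $(\cdot,\cdot)$ and norm $\|u\|=(u,u)^{1/2}$, and let $A:H\to H$ be a self-adjoint operator with eigenvalues $0<\lambda_1\le\lambda_2\le\dots\le\lambda_K$, so that $A\ge \delta I$ with $\delta=\lambda_1>0$. Let $f$ be a real function defined and nonzero on $[\lambda_1,\lambda_K]$ with $f(\lambda_k)>0$ for all $k$, and write $f^{-1}(\lambda)=1/f(\lambda)$. For $\varphi\in H$ let $u=f^{-1}(A)\varphi$ be the solution of $f(A)u=\varphi$. Let $m\ge 1$ and let $a_i>0$, $b_i>0$, $i=1,\dots,m$, be such that the function $r(\lambda)=\sum_{i=1}^m a_i (b_i+\lambda)^{-1}$ satisfies $$|r(\lambda)-f^{-1}(\lambda)|\le \varepsilon\quad\text{for all }\lambda\in[\lambda_1,\lambda_K].$$ Let $w_i\in H$ be the solutions of $(b_iI+A)w_i=\varphi$, $i=1,\dots,m$, and let $\tilde w_i\in H$ satisfy $$\|\tilde w_i-w_i\|\le \varepsilon_i\|\varphi\|,\qquad \varepsilon_i=\frac{\varepsilon_0}{b_i+\delta},\quad i=1,\dots,m,$$ for some $\varepsilon_0\ge 0$. Define $\hat u=\sum_{i=1}^m a_i\tilde w_i$. Then $$\|\hat u-u\|\le\big(\varepsilon+\varepsilon_0\,(f^{-1}(\delta)+\varepsilon)\big)\|\varphi\|.$$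
   Context: Operator functions are defined spectrally: if $\psi_k$ ($\|\psi_k\|=1$) are orthonormal eigenvectors of $A$ with $A\psi_k=\lambda_k\psi_k$, then $g(A)u=\sum_{k=1}^K g(\lambda_k)(u,\psi_k)\psi_k$. In particular $f^{-1}(A)=\sum_k f(\lambda_k)^{-1}(\cdot,\psi_k)\psi_k$, and $f^{-1}(\delta)=1/f(\lambda_1)$. *)

theory Defs
  imports "HOL-Analysis.Analysis"
begin

text \<open>The Hilbert space H is modelled as K-dimensional coordinate space 'a^'n with
 K = CARD('n), scalars 'a = real (conjugation id) or complex (conjugation cnj),
 inner product (x,y) = sum_i x_i * conj(y_i). The library norm on 'a^'n is the
 Euclidean norm, which coincides with (u,u)^(1/2).\<close>

definition sinner :: "('a::comm_semiring_1 \<Rightarrow> 'a) \<Rightarrow> 'a^'n \<Rightarrow> 'a^'n \<Rightarrow> 'a" where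
  "sinner cj x y = (\<Sum>i\<in>UNIV. x$i * cj (y$i))"

text \<open>Spectral operator function: g(A)u = sum_k g(lambda_k) (u,psi_k) psi_k
 (eigenvalues indexed 0..K-1).\<close>
definition spec_fun :: "('a::real_normed_field \<Rightarrow> 'a) \<Rightarrow> (nat \<Rightarrow> 'a^'n) \<Rightarrow> (nat \<Rightarrow> real)
    \<Rightarrow> (real \<Rightarrow> real) \<Rightarrow> 'a^'n \<Rightarrow> 'a^'n" where
  "spec_fun cj \<psi> lam g u =
     (\<Sum>k<CARD('n). (of_real (g (lam k)) * sinner cj u (\<psi> k)) *s \<psi> k)"

text \<open>The statement for a given scalar field with conjugation cj: hypotheses imply the estimate.
 Indices are 0-based: lambda_1 = lam 0, lambda_K = lam (K-1), i = 0..m-1.\<close>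
definition spectral_estimate ::
  "('a::real_normed_field \<Rightarrow> 'a) \<Rightarrow> ('a^'n \<Rightarrow> 'a^'n) \<Rightarrow> (nat \<Rightarrow> 'a^'n) \<Rightarrow> (nat \<Rightarrow> real)
   \<Rightarrow> (real \<Rightarrow> real) \<Rightarrow> 'a^'n \<Rightarrow> nat \<Rightarrow> (nat \<Rightarrow> real) \<Rightarrow> (nat \<Rightarrow> real)
   \<Rightarrow> (nat \<Rightarrow> 'a^'n) \<Rightarrow> (nat \<Rightarrow> 'a^'n) \<Rightarrow> real \<Rightarrow> real \<Rightarrow> bool" where
  "spectral_estimate cj A \<psi> lam f \<phi> m a b w wt \<epsilon> \<epsilon>0 \<longleftrightarrow>
    ((\<forall>x y. A (x + y) = A x + A y) \<and>
     (\<forall>c x. A (c *s x) = c *s A x) \<and>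
     (\<forall>x y. sinner cj (A x) y = sinner cj x (A y)) \<and>
     (\<forall>j<CARD('n). \<forall>k<CARD('n). sinner cj (\<psi> j) (\<psi> k) = (if j = k then 1 else 0)) \<and>
     (\<forall>k<CARD('n). A (\<psi> k) = of_real (lam k) *s \<psi> k) \<and>
     0 < lam 0 \<and>
     (\<forall>j k. j \<le> k \<longrightarrow> k < CARD('n) \<longrightarrow> lam j \<le> lam k) \<and>
     (\<forall>x\<in>{lam 0 .. lam (CARD('n) - 1)}. f x \<noteq> 0) \<and>
     (\<forall>k<CARD('n). 0 < f (lam k)) \<and>
     1 \<le> m \<and>
     (\<forall>i<m. 0 < a i \<and> 0 < b i) \<and>
     (\<forall>x\<in>{lam 0 .. lam (CARD('n) - 1)}.
        \<bar>(\<Sum>i<m. a i / (b i + x)) - 1 / f x\<bar> \<le> \<epsilon>) \<and>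
     (\<forall>i<m. of_real (b i) *s w i + A (w i) = \<phi>) \<and>
     0 \<le> \<epsilon>0 \<and>
     (\<forall>i<m. norm (wt i - w i) \<le> (\<epsilon>0 / (b i + lam 0)) * norm \<phi>))
   \<longrightarrow>
    norm ((\<Sum>i<m. of_real (a i) *s wt i) - spec_fun cj \<psi> lam (\<lambda>x. 1 / f x) \<phi>)
      \<le> (\<epsilon> + \<epsilon>0 * (1 / f (lam 0) + \<epsilon>)) * norm \<phi>"

end

theory Submission
  imports Defs
begin

text \<open>In an orthonormal eigenbasis of \<open>A\<close> every operator involved is diagonal. Since
 \<open>w\<^sub>i = (b\<^sub>i + A)\<^sup>-\<^sup>1\<phi>\<close>, we get \<open>\<Sum> a\<^sub>i w\<^sub>i = r(A)\<phi>\<close>, and Parseval gives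
 \<open>\<parallel>r(A)\<phi> - f\<^sup>-\<^sup>1(A)\<phi>\<parallel> \<le> max\<^sub>k \<bar>r(\<lambda>\<^sub>k) - f\<^sup>-\<^sup>1(\<lambda>\<^sub>k)\<bar> \<parallel>\<phi>\<parallel> \<le> \<epsilon>\<parallel>\<phi>\<parallel>\<close>. By the triangle
 inequality the errors \<open>w\<tilde>\<^sub>i - w\<^sub>i\<close> contribute at most
 \<open>\<Sum> a\<^sub>i \<epsilon>\<^sub>0/(b\<^sub>i + \<delta>) \<parallel>\<phi>\<parallel> = \<epsilon>\<^sub>0 r(\<delta>) \<parallel>\<phi>\<parallel> \<le> \<epsilon>\<^sub>0 (f\<^sup>-\<^sup>1(\<delta>) + \<epsilon>) \<parallel>\<phi>\<parallel>\<close>.\<close>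

definition orthonormal_family :: "('a::comm_semiring_1 \<Rightarrow> 'a) \<Rightarrow> (nat \<Rightarrow> 'a^'n) \<Rightarrow> bool" where
  "orthonormal_family cj \<psi> \<longleftrightarrow>
     (\<forall>j<CARD('n). \<forall>k<CARD('n). sinner cj (\<psi> j) (\<psi> k) = (if j = k then 1 else 0))"

lemma sinner_sum_left: "sinner cj (\<Sum>k\<in>S. g k) y = (\<Sum>k\<in>S. sinner cj (g k) y)"
  unfolding sinner_def by (simp add: sum_component sum_distrib_right sum.swap[of _ S])

lemma sinner_scale_left: "sinner cj (c *s x) y = c * sinner cj x y"
  unfolding sinner_def by (simp add: sum_distrib_left mult.assoc)

lemma sinner_add_left: "sinner cj (x + z) y = sinner cj x y + sinner cj z y"
  unfolding sinner_def by (simp add: sum.distrib distrib_right)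

lemma sinner_orthonormal_sum_left:
  assumes "orthonormal_family cj \<psi>" and "j < CARD('n)"
  shows "sinner cj (\<Sum>k<CARD('n). c k *s (\<psi> k :: 'a::comm_semiring_1^'n)) (\<psi> j) = c j"
proof -
  have "sinner cj (\<Sum>k<CARD('n). c k *s \<psi> k) (\<psi> j)
      = (\<Sum>k<CARD('n). if k = j then c j else 0)"
    unfolding sinner_sum_left sinner_scale_left
    using assms by (intro sum.cong) (auto simp: orthonormal_family_def)
  then show ?thesis using assms(2) by simp
qed

lemma orthonormal_family_inj:
  assumes "orthonormal_family cj (\<psi> :: nat \<Rightarrow> 'a::comm_semiring_1^'n)"
  shows "inj_on \<psi> {..<CARD('n)}"
proof (rule inj_onI, rule ccontr)
  fix j k assume jk: "j \<in> {..<CARD('n)}" "k \<in> {..<CARD('n)}" and "\<psi> j = \<psi> k" "j \<noteq> k"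
  have "sinner cj (\<psi> j) (\<psi> k) = 0" "sinner cj (\<psi> k) (\<psi> k) = 1"
    using assms jk \<open>j \<noteq> k\<close> by (simp_all add: orthonormal_family_def)
  with \<open>\<psi> j = \<psi> k\<close> show False by simp
qed

text \<open>An orthonormal family of \<open>CARD('n)\<close> vectors is independent, hence a basis.\<close>

lemma orthonormal_expansion:
  fixes \<psi> :: "nat \<Rightarrow> 'a::field^'n"
  assumes orth: "orthonormal_family cj \<psi>"
  shows "x = (\<Sum>k<CARD('n). sinner cj x (\<psi> k) *s \<psi> k)"
proof -
  let ?K = "CARD('n)" and ?B = "\<psi> ` {..<CARD('n)}"
  have inj: "inj_on \<psi> {..<?K}" using orth by (rule orthonormal_family_inj)
  have indep: "vec.independent ?B"
  proof (rule vec.independent_if_scalars_zero)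
    fix g v assume "(\<Sum>v\<in>?B. g v *s v) = 0" and "v \<in> ?B"
    then obtain j where "j < ?K" "v = \<psi> j" "(\<Sum>k<?K. g (\<psi> k) *s \<psi> k) = 0"
      by (auto simp: sum.reindex[OF inj])
    then show "g v = 0"
      using sinner_orthonormal_sum_left[OF orth, of j "\<lambda>k. g (\<psi> k)"] by (simp add: sinner_def)
  qed simp
  have "card ?B = vec.dim (UNIV :: ('a^'n) set)"
    using card_image[OF inj] by (simp add: card_cart_basis)
  then have "x \<in> vec.span ?B"
    using vec.card_eq_dim[of ?B UNIV] indep by auto
  then obtain u where "x = (\<Sum>v\<in>?B. u v *s v)"
    using vec.span_finite[of ?B] by auto
  then have x: "x = (\<Sum>k<?K. u (\<psi> k) *s \<psi> k)" by (simp add: sum.reindex[OF inj])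
  have "sinner cj x (\<psi> k) = u (\<psi> k)" if "k < ?K" for k
    by (subst x) (rule sinner_orthonormal_sum_left[OF orth that])
  then show ?thesis by (subst x) (intro sum.cong; simp)
qed

lemma spec_fun_diff:
  "spec_fun cj \<psi> lam g x - spec_fun cj \<psi> lam h x = spec_fun cj \<psi> lam (\<lambda>t. g t - h t) x"
  unfolding spec_fun_def sum_subtractf[symmetric]
  by (intro sum.cong refl) (simp only: of_real_diff left_diff_distrib vec.scale_left_diff_distrib)

lemma spec_fun_linear_combination:
  fixes \<psi> :: "nat \<Rightarrow> 'a::real_normed_field^'n"
  shows "(\<Sum>i\<in>I. of_real (a i) *s spec_fun cj \<psi> lam (g i) x)
     = spec_fun cj \<psi> lam (\<lambda>t. \<Sum>i\<in>I. a i * g i t) x"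
proof -
  have "(\<Sum>i\<in>I. of_real (a i) *s spec_fun cj \<psi> lam (g i) x)
      = (\<Sum>k<CARD('n). \<Sum>i\<in>I. (of_real (a i * g i (lam k)) * sinner cj x (\<psi> k)) *s \<psi> k)"
    unfolding spec_fun_def
    by (simp add: vec.scale_sum_right vec.scale_scale mult.assoc sum.swap[of _ I])
  also have "\<dots> = spec_fun cj \<psi> lam (\<lambda>t. \<Sum>i\<in>I. a i * g i t) x"
    unfolding spec_fun_def
    by (intro sum.cong refl) (simp add: vec.scale_sum_left[symmetric] sum_distrib_right)
  finally show ?thesis .
qed

lemma of_real_vector_scalar_mult:
  "(of_real c :: 'a) *s x = c *\<^sub>R (x :: 'a::real_normed_field^'n)"
  by (simp add: vec_eq_iff flip: scaleR_conv_of_real)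

lemma norm_nonneg_combination_le:
  fixes v :: "'i \<Rightarrow> 'a::real_normed_field^'n"
  assumes "\<And>i. i \<in> I \<Longrightarrow> 0 \<le> a i" and "\<And>i. i \<in> I \<Longrightarrow> norm (v i) \<le> c i"
  shows "norm (\<Sum>i\<in>I. of_real (a i) *s v i) \<le> (\<Sum>i\<in>I. a i * c i)"
proof -
  have "norm (\<Sum>i\<in>I. of_real (a i) *s v i) \<le> (\<Sum>i\<in>I. norm (a i *\<^sub>R v i))"
    unfolding of_real_vector_scalar_mult by (rule norm_sum)
  also have "\<dots> \<le> (\<Sum>i\<in>I. a i * c i)"
    using assms by (intro sum_mono) (simp add: mult_left_mono)
  finally show ?thesis .
qed

locale conjugation =
  fixes cj :: "'a::real_normed_field \<Rightarrow> 'a"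
  assumes conj_add: "\<And>x y. cj (x + y) = cj x + cj y"
    and conj_mult: "\<And>x y. cj (x * y) = cj x * cj y"
    and conj_of_real: "\<And>r. cj (of_real r) = of_real r"
    and mult_conj: "\<And>x. x * cj x = of_real (norm x ^ 2)"
begin

lemma conj_sum: "cj (sum g S) = (\<Sum>k\<in>S. cj (g k))"
  using conj_of_real[of 0]
  by (induction S rule: infinite_finite_induct) (auto simp: conj_add)

lemma sinner_sum_right: "sinner cj x (\<Sum>k\<in>S. g k) = (\<Sum>k\<in>S. sinner cj x (g k))"
  unfolding sinner_def by (simp add: sum_component conj_sum sum_distrib_left sum.swap[of _ S])

lemma sinner_scale_right: "sinner cj x (c *s y) = cj c * sinner cj x y"
  unfolding sinner_def by (simp add: conj_mult sum_distrib_left algebra_simps)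

lemma sinner_self: "sinner cj x x = of_real (norm x ^ 2)"
proof -
  have "norm x ^ 2 = (\<Sum>i\<in>UNIV. norm (x$i) ^ 2)"
    unfolding norm_vec_def L2_set_def by (simp add: sum_nonneg)
  then show ?thesis unfolding sinner_def by (simp add: mult_conj)
qed

lemma parseval:
  assumes orth: "orthonormal_family cj (\<psi> :: nat \<Rightarrow> 'a^'n)"
  shows "norm (\<Sum>k<CARD('n). c k *s \<psi> k) ^ 2 = (\<Sum>k<CARD('n). norm (c k) ^ 2)"
proof -
  let ?y = "\<Sum>k<CARD('n). c k *s \<psi> k"
  have "of_real (norm ?y ^ 2) = sinner cj ?y ?y" by (simp add: sinner_self)
  also have "\<dots> = (\<Sum>k<CARD('n). cj (c k) * sinner cj ?y (\<psi> k))"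
    by (simp add: sinner_sum_right sinner_scale_right)
  also have "\<dots> = (\<Sum>k<CARD('n). of_real (norm (c k) ^ 2))"
  proof (intro sum.cong refl)
    fix k assume "k \<in> {..<CARD('n)}"
    then have "cj (c k) * sinner cj ?y (\<psi> k) = c k * cj (c k)"
      by (simp add: sinner_orthonormal_sum_left[OF orth] mult.commute)
    then show "cj (c k) * sinner cj ?y (\<psi> k) = of_real (norm (c k) ^ 2)"
      by (simp only: mult_conj)
  qed
  also have "\<dots> = of_real (\<Sum>k<CARD('n). norm (c k) ^ 2)"
    by (simp only: of_real_sum)
  finally show ?thesis by (simp only: of_real_eq_iff)
qed

lemma norm_spec_fun_le:
  assumes orth: "orthonormal_family cj (\<psi> :: nat \<Rightarrow> 'a^'n)"
    and bound: "\<And>k. k < CARD('n) \<Longrightarrow> \<bar>g (lam k)\<bar> \<le> \<epsilon>"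
  shows "norm (spec_fun cj \<psi> lam g x) \<le> \<epsilon> * norm x"
proof (rule power2_le_imp_le)
  define s where "s k = sinner cj x (\<psi> k)" for k
  have "0 \<le> \<epsilon>" using bound[of 0] by force
  have "norm (spec_fun cj \<psi> lam g x) ^ 2 = (\<Sum>k<CARD('n). (g (lam k))\<^sup>2 * norm (s k) ^ 2)"
    unfolding spec_fun_def parseval[OF orth] s_def by (simp add: norm_mult power_mult_distrib)
  also have "\<dots> \<le> (\<Sum>k<CARD('n). \<epsilon>\<^sup>2 * norm (s k) ^ 2)"
    using bound \<open>0 \<le> \<epsilon>\<close> by (intro sum_mono mult_right_mono) (simp_all add: power2_le_iff_abs_le)
  also have "\<dots> = \<epsilon>\<^sup>2 * norm (\<Sum>k<CARD('n). s k *s \<psi> k) ^ 2"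
    by (simp add: parseval[OF orth] sum_distrib_left)
  also have "\<dots> = (\<epsilon> * norm x)\<^sup>2"
    unfolding s_def orthonormal_expansion[OF orth, symmetric] by (simp add: power_mult_distrib)
  finally show "norm (spec_fun cj \<psi> lam g x) ^ 2 \<le> (\<epsilon> * norm x)\<^sup>2" .
  show "0 \<le> \<epsilon> * norm x" using \<open>0 \<le> \<epsilon>\<close> by simp
qed

lemma resolvent_eq_spec_fun:
  fixes A :: "'a^'n \<Rightarrow> 'a^'n"
  assumes self_adjoint: "\<forall>x y. sinner cj (A x) y = sinner cj x (A y)"
    and orth: "orthonormal_family cj \<psi>"
    and eig: "\<forall>k<CARD('n). A (\<psi> k) = of_real (lam k) *s \<psi> k"
    and nonzero: "\<forall>k<CARD('n). \<beta> + lam k \<noteq> 0"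
    and solves: "of_real \<beta> *s w + A w = \<phi>"
  shows "w = spec_fun cj \<psi> lam (\<lambda>t. 1 / (\<beta> + t)) \<phi>"
proof -
  have "sinner cj w (\<psi> k) = of_real (1 / (\<beta> + lam k)) * sinner cj \<phi> (\<psi> k)"
    if k: "k < CARD('n)" for k
  proof -
    have "sinner cj \<phi> (\<psi> k) = of_real (\<beta> + lam k) * sinner cj w (\<psi> k)"
      using self_adjoint eig k unfolding solves[symmetric]
      by (simp add: sinner_add_left sinner_scale_left sinner_scale_right conj_of_real distrib_right)
    moreover have "of_real (\<beta> + lam k) \<noteq> (0 :: 'a)" using nonzero k by (simp del: of_real_add)
    ultimately show ?thesis by (simp add: of_real_divide del: of_real_add)
  qed
  then show ?thesis
    unfolding spec_fun_def by (subst orthonormal_expansion[OF orth]) (intro sum.cong; simp)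
qed

lemma spectral_estimate_holds:
  fixes A :: "'a^'n \<Rightarrow> 'a^'n"
  shows "spectral_estimate cj A \<psi> lam f \<phi> m a b w wt \<epsilon> \<epsilon>0"
proof (unfold spectral_estimate_def, intro impI, elim conjE)
  let ?K = "CARD('n)" and ?u = "spec_fun cj \<psi> lam (\<lambda>t. 1 / f t) \<phi>"
  define r where "r t = (\<Sum>i<m. a i / (b i + t))" for t
  assume self_adjoint: "\<forall>x y. sinner cj (A x) y = sinner cj x (A y)"
    and "\<forall>j<?K. \<forall>k<?K. sinner cj (\<psi> j) (\<psi> k) = (if j = k then 1 else 0)"
    and eig: "\<forall>k<?K. A (\<psi> k) = of_real (lam k) *s \<psi> k"
    and "0 < lam 0" and mono: "\<forall>j k. j \<le> k \<longrightarrow> k < ?K \<longrightarrow> lam j \<le> lam k"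
    and ab: "\<forall>i<m. 0 < a i \<and> 0 < b i"
    and approx: "\<forall>t\<in>{lam 0 .. lam (?K - 1)}. \<bar>(\<Sum>i<m. a i / (b i + t)) - 1 / f t\<bar> \<le> \<epsilon>"
    and solves: "\<forall>i<m. of_real (b i) *s w i + A (w i) = \<phi>"
    and "0 \<le> \<epsilon>0"
    and wt: "\<forall>i<m. norm (wt i - w i) \<le> (\<epsilon>0 / (b i + lam 0)) * norm \<phi>"
  then have orth: "orthonormal_family cj \<psi>" by (simp add: orthonormal_family_def)
  have spectrum: "lam k \<in> {lam 0 .. lam (?K - 1)}" if "k < ?K" for k
    using mono that by auto
  have "w i = spec_fun cj \<psi> lam (\<lambda>t. 1 / (b i + t)) \<phi>" if "i < m" for i
  proof (rule resolvent_eq_spec_fun[OF self_adjoint orth eig])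
    show "\<forall>k<?K. b i + lam k \<noteq> 0"
      using \<open>0 < lam 0\<close> ab spectrum that by (smt (verit) atLeastAtMost_iff)
  qed (use solves that in simp)
  then have "(\<Sum>i<m. of_real (a i) *s w i) = spec_fun cj \<psi> lam r \<phi>"
    by (simp add: spec_fun_linear_combination r_def[abs_def])
  then have exact: "norm ((\<Sum>i<m. of_real (a i) *s w i) - ?u) \<le> \<epsilon> * norm \<phi>"
    using approx spectrum by (simp add: spec_fun_diff norm_spec_fun_le[OF orth] r_def)
  have "norm (\<Sum>i<m. of_real (a i) *s (wt i - w i)) \<le> (\<Sum>i<m. a i * (\<epsilon>0 / (b i + lam 0) * norm \<phi>))"
    using ab wt by (intro norm_nonneg_combination_le) auto
  also have "\<dots> = \<epsilon>0 * r (lam 0) * norm \<phi>"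
    by (simp add: r_def sum_distrib_left sum_distrib_right mult_ac)
  also have "\<dots> \<le> \<epsilon>0 * (1 / f (lam 0) + \<epsilon>) * norm \<phi>"
    using approx spectrum[of 0] \<open>0 \<le> \<epsilon>0\<close>
    by (intro mult_right_mono mult_left_mono) (auto simp: r_def abs_le_iff simp del: atLeastAtMost_iff)
  finally have perturbation:
    "norm (\<Sum>i<m. of_real (a i) *s (wt i - w i)) \<le> \<epsilon>0 * (1 / f (lam 0) + \<epsilon>) * norm \<phi>" .
  have "(\<Sum>i<m. of_real (a i) *s wt i) - ?u
      = (\<Sum>i<m. of_real (a i) *s (wt i - w i)) + ((\<Sum>i<m. of_real (a i) *s w i) - ?u)"
    by (simp add: vec.scale_right_diff_distrib sum_subtractf)
  then have "norm ((\<Sum>i<m. of_real (a i) *s wt i) - ?u)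
      \<le> norm (\<Sum>i<m. of_real (a i) *s (wt i - w i)) + norm ((\<Sum>i<m. of_real (a i) *s w i) - ?u)"
    by (simp only: norm_triangle_ineq)
  also have "\<dots> \<le> \<epsilon>0 * (1 / f (lam 0) + \<epsilon>) * norm \<phi> + \<epsilon> * norm \<phi>"
    using perturbation exact by (rule add_mono)
  finally show "norm ((\<Sum>i<m. of_real (a i) *s wt i) - ?u) \<le> (\<epsilon> + \<epsilon>0 * (1 / f (lam 0) + \<epsilon>)) * norm \<phi>"
    by (simp add: algebra_simps)
qed

end

interpretation real_conjugation: conjugation "id :: real \<Rightarrow> real"
  by unfold_locales (auto simp: power2_eq_square)

interpretation complex_conjugation: conjugation cnj
proof
  show "x * cnj x = of_real (norm x ^ 2)" for x by (rule complex_norm_square[symmetric])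
qed auto

theorem theorem1:
  shows "(\<forall>(A :: real^'n \<Rightarrow> real^'n) \<psi> lam f \<phi> m a b w wt \<epsilon> \<epsilon>0.
            spectral_estimate id A \<psi> lam f \<phi> m a b w wt \<epsilon> \<epsilon>0) \<and>
         (\<forall>(A :: complex^'n \<Rightarrow> complex^'n) \<psi> lam f \<phi> m a b w wt \<epsilon> \<epsilon>0.
            spectral_estimate cnj A \<psi> lam f \<phi> m a b w wt \<epsilon> \<epsilon>0)"
  using real_conjugation.spectral_estimate_holds complex_conjugation.spectral_estimate_holds
  by blast

end
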